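(* Let $Q$ be a non-empty finite set of primes, $d\ge1$ an integer, $\ell$ a positive odd integer, and $m:\mathbb Z_{>0}\to\mathbb R_{>0}$ a multiplicative function with $m(q)\le q-1$ and $m(q)\le d$ for all $q\in Q$. Let $Q(\ell)=\{r\in\mathcal D(\prod_{q\in Q}q):\omega(r)\le\ell\}$ and $W_m(Q)=\prod_{q\in Q}(1-\frac{m(q)}{q})$. Then $$\sum_{r\in Q(\ell)}\frac{\mu(r)\,m(r)}{r}\;\ge\;W_m(Q)\Big(1-\Big(\frac{e\,\alpha}{\ell}\Big)^{\ell}\alpha\, e^{\alpha}\Big),\qquad\text{where }\alpha=(d+1)^2(2+\ln\ln(|Q|+1)).$$
   Context: $\mathcal D(n)$ is the set of positive divisors of $n$; $\omega(r)$ is the number of distinct prime divisors of $r$; $\mu$ is the Möbius function (for square-free $r$, $\mu(r)=(-1)^{\omega(r)}$). A function $m$ is multiplicative if $m(ab)=m(a)m(b)$ for all coprime positive integers $a,b$. $e$ is Euler's number. *)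

theory Defs
  imports "HOL-Analysis.Analysis" "HOL-Computational_Algebra.Computational_Algebra"
begin

definition omega :: "nat \<Rightarrow> nat" where
  "omega r = card (prime_factors r)"

definition moebius :: "nat \<Rightarrow> int" where
  "moebius r = (if squarefree r then (-1) ^ omega r else 0)"

definition multiplicative :: "(nat \<Rightarrow> real) \<Rightarrow> bool" where
  "multiplicative m \<longleftrightarrow> (\<forall>a b. a > 0 \<longrightarrow> b > 0 \<longrightarrow> coprime a b \<longrightarrow> m (a * b) = m a * m b)"

end

theory Submission
  imports Defs
begin

text \<open>
  Put \<open>x q = m q / q\<close> and \<open>W = (\<Prod>q\<in>Q. 1 - x q)\<close>. Since the divisors of \<open>\<Prod>Q\<close> are the
  products of subsets of \<open>Q\<close>, the left-hand side is the expansion of \<open>W\<close> by inclusion-exclusion,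
  truncated after the subsets with at most \<open>l\<close> elements. Induction over \<open>Q\<close> shows that the
  truncation error lies between \<open>0\<close> and \<open>W \<Sum>\<^sub>T (\<Prod>q\<in>T. y q) (card T choose (l+1))\<close>, where
  \<open>y q = x q / (1 - x q)\<close>, with a sign fixed by the parity of \<open>l\<close>. This binomial moment is at
  most \<open>e\<^sup>s s\<^bsup>l+1\<^esup> / (l+1)! \<le> (e s / l)\<^sup>l s e\<^sup>s\<close> with \<open>s = \<Sum>q\<in>Q. y q\<close>. Finally \<open>s \<le> \<alpha>\<close>:
  the primes \<open>q > 2d\<close> satisfy \<open>y q \<le> (d+1)\<^sup>2/(2q)\<close>, and a sum of \<open>1/q\<close> over at most \<open>n\<close> odd
  primes is at most \<open>1 + 2 ln (ln (n+1))\<close>, because the primes in \<open>(N, 2N]\<close> divide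
  \<open>2N choose N \<le> 4\<^sup>N\<close>.
\<close>

section \<open>Truncated inclusion-exclusion\<close>

lemma sum_Pow_insert:
  assumes "finite A" "a \<notin> A"
  shows "(\<Sum>S\<in>Pow (insert a A). f S) = (\<Sum>S\<in>Pow A. f S) + (\<Sum>S\<in>Pow A. f (insert a S))"
proof -
  have "inj_on (insert a) (Pow A)"
    using assms(2) unfolding inj_on_def by (metis Diff_insert_absorb PowD subsetD)
  moreover have "Pow A \<inter> insert a ` Pow A = {}"
    using assms(2) by blast
  ultimately show ?thesis
    using assms(1) by (simp add: Pow_insert sum.union_disjoint sum.reindex)
qed

definition trunc_incl_excl :: "('a \<Rightarrow> real) \<Rightarrow> 'a set \<Rightarrow> nat \<Rightarrow> real" where
  "trunc_incl_excl x A k = (\<Sum>S\<in>Pow A. if card S < k then (-1) ^ card S * (\<Prod>q\<in>S. x q) else 0)"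

definition binomial_moment :: "('a \<Rightarrow> real) \<Rightarrow> 'a set \<Rightarrow> nat \<Rightarrow> real" where
  "binomial_moment y A k = (\<Sum>T\<in>Pow A. (\<Prod>q\<in>T. y q) * real (card T choose k))"

lemma trunc_incl_excl_0 [simp]: "trunc_incl_excl x A 0 = 0"
  by (simp add: trunc_incl_excl_def)

lemma trunc_incl_excl_empty: "trunc_incl_excl x {} k = (if k = 0 then 0 else 1)"
  by (simp add: trunc_incl_excl_def)

lemma trunc_incl_excl_insert:
  assumes "finite A" "a \<notin> A"
  shows "trunc_incl_excl x (insert a A) (Suc k) = trunc_incl_excl x A (Suc k) - x a * trunc_incl_excl x A k"
proof -
  have "(\<Sum>S\<in>Pow A. if card (insert a S) < Suc k
          then (-1) ^ card (insert a S) * (\<Prod>q\<in>insert a S. x q) else 0)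
      = (\<Sum>S\<in>Pow A. - x a * (if card S < k then (-1) ^ card S * (\<Prod>q\<in>S. x q) else 0))"
  proof (rule sum.cong)
    fix S assume "S \<in> Pow A"
    then have "finite S" "a \<notin> S"
      using assms by (auto intro: finite_subset)
    then show "(if card (insert a S) < Suc k then (-1) ^ card (insert a S) * (\<Prod>q\<in>insert a S. x q) else 0)
             = - x a * (if card S < k then (-1) ^ card S * (\<Prod>q\<in>S. x q) else 0)"
      by simp
  qed simp
  then show ?thesis
    unfolding trunc_incl_excl_def sum_Pow_insert[OF assms] by (simp add: sum_distrib_left sum_negf)
qed

lemma binomial_moment_empty: "binomial_moment y {} k = (if k = 0 then 1 else 0)"
  by (simp add: binomial_moment_def)

lemma binomial_moment_nonneg: "\<forall>q\<in>A. 0 \<le> y q \<Longrightarrow> 0 \<le> binomial_moment y A k"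
  unfolding binomial_moment_def by (intro sum_nonneg mult_nonneg_nonneg prod_nonneg) auto

lemma binomial_moment_insert_0:
  assumes "finite A" "a \<notin> A"
  shows "binomial_moment y (insert a A) 0 = (1 + y a) * binomial_moment y A 0"
proof -
  have "finite S" "a \<notin> S" if "S \<in> Pow A" for S
    using assms that by (auto intro: finite_subset)
  then have "(\<Sum>S\<in>Pow A. (\<Prod>q\<in>insert a S. y q)) = (\<Sum>S\<in>Pow A. y a * (\<Prod>q\<in>S. y q))"
    by (intro sum.cong) auto
  then show ?thesis
    unfolding binomial_moment_def sum_Pow_insert[OF assms] by (simp add: sum_distrib_left sum.distrib algebra_simps)
qed

lemma binomial_moment_insert_Suc:
  assumes "finite A" "a \<notin> A"
  shows "binomial_moment y (insert a A) (Suc k)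
       = (1 + y a) * binomial_moment y A (Suc k) + y a * binomial_moment y A k"
proof -
  have "finite S" "a \<notin> S" if "S \<in> Pow A" for S
    using assms that by (auto intro: finite_subset)
  then have "(\<Sum>S\<in>Pow A. (\<Prod>q\<in>insert a S. y q) * real (card (insert a S) choose Suc k))
      = (\<Sum>S\<in>Pow A. y a * ((\<Prod>q\<in>S. y q) * real (card S choose Suc k))
                    + y a * ((\<Prod>q\<in>S. y q) * real (card S choose k)))"
    by (intro sum.cong) (auto simp: algebra_simps)
  then show ?thesis
    unfolding binomial_moment_def sum_Pow_insert[OF assms]
    by (simp add: sum.distrib sum_distrib_left algebra_simps)
qed

text \<open>A weighted form of the Bonferroni inequalities.\<close>

lemma trunc_incl_excl_error_bounds:
  fixes x :: "'a \<Rightarrow> real"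
  assumes "finite A" "\<forall>q\<in>A. 0 \<le> x q \<and> x q < 1"
  shows "0 \<le> (-1) ^ Suc k * (trunc_incl_excl x A k - (\<Prod>q\<in>A. 1 - x q)) \<and>
         (-1) ^ Suc k * (trunc_incl_excl x A k - (\<Prod>q\<in>A. 1 - x q))
           \<le> (\<Prod>q\<in>A. 1 - x q) * binomial_moment (\<lambda>q. x q / (1 - x q)) A k"
  using assms
proof (induction A arbitrary: k rule: finite_induct)
  case empty
  show ?case by (cases k) (auto simp: trunc_incl_excl_empty binomial_moment_empty)
next
  case (insert a A)
  let ?W = "\<Prod>q\<in>A. 1 - x q"
  let ?y = "\<lambda>q. x q / (1 - x q)"
  let ?E = "\<lambda>k. (-1) ^ Suc k * (trunc_incl_excl x A k - ?W)"
  have xa: "0 \<le> x a" "x a < 1"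
    using insert.prems by auto
  have IH: "0 \<le> ?E k" "?E k \<le> ?W * binomial_moment ?y A k" for k
    using insert.IH insert.prems by auto
  have W: "0 \<le> ?W"
    using insert.prems by (intro prod_nonneg) auto
  have W_insert: "(\<Prod>q\<in>insert a A. 1 - x q) = (1 - x a) * ?W"
    using insert.hyps by simp
  have odds: "(1 - x a) * (1 + ?y a) = 1" "(1 - x a) * ?y a = x a"
    using xa by (auto simp: field_simps)
  show ?case
  proof (cases k)
    case 0
    have "(1 - x a) * ?W \<le> ?W"
      using xa W by (simp add: mult_left_le_one_le)
    also have "?W \<le> ?W * binomial_moment ?y A 0"
      using IH(2)[of 0] by simp
    also have "\<dots> = ?W * binomial_moment ?y A 0 * ((1 - x a) * (1 + ?y a))"
      using odds(1) by simp
    also have "\<dots> = (1 - x a) * ?W * binomial_moment ?y (insert a A) 0"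
      using insert.hyps by (simp add: binomial_moment_insert_0 mult_ac)
    finally show ?thesis
      using 0 xa W by (simp add: W_insert)
  next
    case (Suc j)
    have error_insert: "(-1) ^ Suc k * (trunc_incl_excl x (insert a A) k - (\<Prod>q\<in>insert a A. 1 - x q))
        = ?E (Suc j) + x a * ?E j"
      using insert.hyps by (simp add: Suc W_insert trunc_incl_excl_insert algebra_simps)
    have moment_insert: "(\<Prod>q\<in>insert a A. 1 - x q) * binomial_moment ?y (insert a A) k
        = ?W * binomial_moment ?y A (Suc j) + x a * (?W * binomial_moment ?y A j)"
    proof -
      have "(\<Prod>q\<in>insert a A. 1 - x q) * binomial_moment ?y (insert a A) k
          = ?W * (binomial_moment ?y A (Suc j) * ((1 - x a) * (1 + ?y a))
                  + binomial_moment ?y A j * ((1 - x a) * ?y a))"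
        using insert.hyps by (simp add: Suc W_insert binomial_moment_insert_Suc algebra_simps)
      then show ?thesis
        by (simp only: odds) (simp add: algebra_simps)
    qed
    have "0 \<le> ?E (Suc j) + x a * ?E j"
      by (intro add_nonneg_nonneg mult_nonneg_nonneg IH(1) xa(1))
    moreover have "?E (Suc j) + x a * ?E j
        \<le> ?W * binomial_moment ?y A (Suc j) + x a * (?W * binomial_moment ?y A j)"
      by (rule add_mono[OF IH(2) mult_left_mono[OF IH(2) xa(1)]])
    ultimately show ?thesis
      unfolding error_insert moment_insert ..
  qed
qed

section \<open>Bounding the binomial moment\<close>

lemma power_div_fact_le_exp:
  fixes x :: real
  assumes "0 \<le> x"
  shows "x ^ n / fact n \<le> exp x"
proof -
  have sums: "(\<lambda>i. x ^ i / fact i) sums exp x"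
    using exp_converges[of x] by (simp add: divide_inverse mult.commute)
  have "(\<Sum>i\<in>{n}. x ^ i / fact i) \<le> (\<Sum>i. x ^ i / fact i)"
    by (rule sum_le_suminf) (use sums assms in \<open>auto simp: sums_iff\<close>)
  then show ?thesis
    using sums by (simp add: sums_iff)
qed

lemma power_div_fact_le:
  fixes s :: real
  assumes "0 \<le> s" "0 < l"
  shows "s ^ l / fact l \<le> (exp 1 * s / real l) ^ l"
proof -
  have "real l ^ l / fact l \<le> exp 1 ^ l"
    using power_div_fact_le_exp[of "real l" l] by (simp add: exp_of_nat_mult[symmetric])
  then have "(s / real l) ^ l * (real l ^ l / fact l) \<le> (s / real l) ^ l * exp 1 ^ l"
    using assms by (intro mult_left_mono) auto
  then show ?thesis
    using assms by (simp add: power_divide power_mult_distrib mult_ac)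
qed

lemma binomial_two_terms_le_power:
  fixes s y :: real
  assumes "0 \<le> s" "0 \<le> y"
  shows "s ^ Suc j + real (Suc j) * y * s ^ j \<le> (s + y) ^ Suc j"
proof (induction j)
  case (Suc j)
  have "s ^ Suc (Suc j) + real (Suc (Suc j)) * y * s ^ Suc j
      \<le> (s + y) * (s ^ Suc j + real (Suc j) * y * s ^ j)"
    using assms by (simp add: algebra_simps)
  also have "\<dots> \<le> (s + y) * (s + y) ^ Suc j"
    using Suc.IH assms by (intro mult_left_mono) auto
  finally show ?case by simp
qed simp

lemma binomial_moment_le:
  assumes "finite A" "\<forall>q\<in>A. 0 \<le> y q"
  shows "binomial_moment y A k \<le> exp (\<Sum>q\<in>A. y q) * (\<Sum>q\<in>A. y q) ^ k / fact k"
  using assms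
proof (induction A arbitrary: k rule: finite_induct)
  case empty
  show ?case by (cases k) (auto simp: binomial_moment_empty)
next
  case (insert a A)
  let ?s = "\<Sum>q\<in>A. y q"
  have ya: "0 \<le> y a" and s: "0 \<le> ?s"
    using insert.prems by (auto intro: sum_nonneg)
  have IH: "binomial_moment y A k \<le> exp ?s * ?s ^ k / fact k" for k
    using insert.IH insert.prems by auto
  have exp_ya: "1 + y a \<le> exp (y a)"
    by simp
  have sum_insert: "(\<Sum>q\<in>insert a A. y q) = ?s + y a"
    using insert.hyps by simp
  show ?case
  proof (cases k)
    case 0
    have "binomial_moment y (insert a A) 0 = (1 + y a) * binomial_moment y A 0"
      using insert.hyps by (simp add: binomial_moment_insert_0)
    also have "\<dots> \<le> exp (y a) * exp ?s"
      using IH[of 0] ya binomial_moment_nonneg[of A y 0] insert.prems exp_ya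
      by (intro mult_mono) auto
    finally show ?thesis
      using 0 by (simp add: sum_insert exp_add mult.commute)
  next
    case (Suc j)
    have "binomial_moment y (insert a A) k
        = (1 + y a) * binomial_moment y A (Suc j) + y a * binomial_moment y A j"
      using insert.hyps by (simp add: Suc binomial_moment_insert_Suc)
    also have "\<dots> \<le> (1 + y a) * (exp ?s * ?s ^ Suc j / fact (Suc j)) + y a * (exp ?s * ?s ^ j / fact j)"
      using IH[of j] IH[of "Suc j"] ya by (intro add_mono mult_left_mono) auto
    also have "\<dots> = exp ?s / fact (Suc j) * ((1 + y a) * ?s ^ Suc j + real (Suc j) * y a * ?s ^ j)"
      by (simp add: divide_simps) (simp add: algebra_simps)
    also have "\<dots> \<le> exp ?s / fact (Suc j) * ((1 + y a) * (?s + y a) ^ Suc j)"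
    proof -
      have "(1 + y a) * ?s ^ Suc j + real (Suc j) * y a * ?s ^ j
          \<le> (1 + y a) * (?s ^ Suc j + real (Suc j) * y a * ?s ^ j)"
        using ya s by (simp add: algebra_simps)
      also have "\<dots> \<le> (1 + y a) * (?s + y a) ^ Suc j"
        using binomial_two_terms_le_power[OF s ya, of j] ya by (intro mult_left_mono) auto
      finally show ?thesis
        by (intro mult_left_mono) auto
    qed
    also have "\<dots> \<le> exp ?s / fact (Suc j) * (exp (y a) * (?s + y a) ^ Suc j)"
      using exp_ya s ya by (intro mult_left_mono mult_right_mono) auto
    also have "\<dots> = exp (\<Sum>q\<in>insert a A. y q) * (\<Sum>q\<in>insert a A. y q) ^ k / fact k"
      unfolding Suc sum_insert exp_add by simp
    finally show ?thesis .
  qed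
qed

lemma trunc_incl_excl_odd_lower_bound:
  fixes x :: "'a \<Rightarrow> real"
  assumes "finite A" "\<forall>q\<in>A. 0 \<le> x q \<and> x q < 1" "odd l"
    and "(\<Sum>q\<in>A. x q / (1 - x q)) \<le> \<alpha>"
  shows "(\<Prod>q\<in>A. 1 - x q) * (1 - (exp 1 * \<alpha> / real l) ^ l * \<alpha> * exp \<alpha>)
           \<le> trunc_incl_excl x A (Suc l)"
proof -
  let ?W = "\<Prod>q\<in>A. 1 - x q"
  define y where "y q = x q / (1 - x q)" for q
  define s where "s = (\<Sum>q\<in>A. y q)"
  have l: "0 < l"
    using \<open>odd l\<close> by (intro odd_pos)
  have y: "\<forall>q\<in>A. 0 \<le> y q"
    using assms(2) by (auto simp: y_def)
  then have s: "0 \<le> s" "s \<le> \<alpha>"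
    using assms(4) by (auto simp: s_def y_def intro: sum_nonneg)
  have W: "0 \<le> ?W"
    using assms(2) by (intro prod_nonneg) auto
  have "?W - trunc_incl_excl x A (Suc l) \<le> ?W * binomial_moment y A (Suc l)"
    using trunc_incl_excl_error_bounds[OF assms(1,2), of "Suc l"] \<open>odd l\<close>
    by (simp add: y_def[abs_def])
  moreover have "binomial_moment y A (Suc l) \<le> (exp 1 * \<alpha> / real l) ^ l * \<alpha> * exp \<alpha>"
  proof -
    have "binomial_moment y A (Suc l) \<le> exp s * s ^ Suc l / fact (Suc l)"
      using binomial_moment_le[OF assms(1) y, of "Suc l"] by (simp add: s_def)
    also have "\<dots> \<le> exp s * s ^ Suc l / fact l"
      using s by (intro divide_left_mono fact_mono) auto
    also have "\<dots> = exp s * s * (s ^ l / fact l)"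
      by simp
    also have "\<dots> \<le> exp s * s * (exp 1 * s / real l) ^ l"
      using power_div_fact_le[OF s(1) l] s by (intro mult_left_mono) auto
    also have "\<dots> \<le> exp \<alpha> * \<alpha> * (exp 1 * \<alpha> / real l) ^ l"
      using s by (intro mult_mono power_mono divide_right_mono) auto
    finally show ?thesis
      by (simp only: mult_ac)
  qed
  ultimately have "?W - trunc_incl_excl x A (Suc l) \<le> ?W * ((exp 1 * \<alpha> / real l) ^ l * \<alpha> * exp \<alpha>)"
    using W by (meson mult_left_mono order_trans)
  then show ?thesis
    by (simp add: right_diff_distrib)
qed

section \<open>Reciprocals of odd primes\<close>

lemma sum_split_filter:
  "finite A \<Longrightarrow> sum f A = sum f {x\<in>A. P x} + sum f {x\<in>A. \<not> P x}"
  by (subst sum.union_disjoint[symmetric]) (auto intro: sum.cong)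

lemma one_minus_inverse_le_ln:
  fixes x :: real
  assumes "0 < x"
  shows "1 - 1 / x \<le> ln x"
  using ln_le_minus_one[of "1 / x"] assms by (simp add: ln_div)

lemma ln_3_ge_1: "1 \<le> ln (3::real)"
  using e_less_272 by (subst ln_ge_iff) auto

lemma prod_primes_dvd:
  fixes B :: "nat set"
  assumes "finite B" "\<forall>p\<in>B. prime p" "\<forall>p\<in>B. p dvd n"
  shows "\<Prod>B dvd n"
  using assms
proof (induction B rule: finite_induct)
  case (insert p B)
  have "coprime p (\<Prod>B)"
    using insert by (intro prod_coprime_right) (auto intro: primes_coprime)
  then show ?case
    using insert by (simp add: divides_mult)
qed simp

lemma prime_dvd_central_binomial:
  fixes p N :: nat
  assumes "prime p" "N < p" "p \<le> 2 * N"
  shows "p dvd (2 * N choose N)"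
proof -
  have "fact N * fact N * (2 * N choose N) = (fact (2 * N) :: nat)"
    using binomial_fact_lemma[of N "2 * N"] by simp
  moreover have "p dvd (fact (2 * N) :: nat)" "\<not> p dvd (fact N :: nat)"
    using assms by (simp_all add: prime_dvd_fact_iff)
  ultimately show ?thesis
    using assms(1) by (metis prime_dvd_mult_iff)
qed

lemma sum_inverse_primes_dyadic_le:
  fixes A :: "nat set"
  assumes "\<forall>q\<in>A. prime q" "1 \<le> j"
  shows "(\<Sum>q\<in>{q\<in>A. 2 ^ j < q \<and> q \<le> 2 * 2 ^ j}. 1 / real q) \<le> 2 / real j"
proof -
  define N :: nat where "N = 2 ^ j"
  define B where "B = {q\<in>A. N < q \<and> q \<le> 2 * N}"
  have B: "finite B" "\<forall>p\<in>B. prime p"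
    using assms(1) by (auto simp: B_def intro: finite_subset[of _ "{..2 * N}"])
  have "N ^ card B \<le> \<Prod>B"
    using prod_mono[of B "\<lambda>_. N" "\<lambda>q. q"] by (auto simp: B_def)
  also have "\<Prod>B \<le> (2 * N choose N)"
  proof (intro dvd_imp_le prod_primes_dvd[OF B])
    show "\<forall>p\<in>B. p dvd (2 * N choose N)"
      using assms(1) by (auto simp: B_def intro: prime_dvd_central_binomial)
  qed simp
  also have "\<dots> \<le> 2 ^ (2 * N)"
    by (rule binomial_le_pow2)
  finally have "(2::nat) ^ (j * card B) \<le> 2 ^ (2 * N)"
    by (simp add: N_def power_mult)
  then have "j * card B \<le> 2 * N"
    by simp
  then have card_B: "real j * card B \<le> 2 * N"
    by (metis of_nat_le_iff of_nat_mult of_nat_numeral)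
  have "(\<Sum>q\<in>B. 1 / real q) \<le> (\<Sum>q\<in>B. 1 / real N)"
    by (rule sum_mono) (auto simp: B_def N_def frac_le)
  also have "\<dots> \<le> 2 / real j"
    using card_B assms(2) by (simp add: N_def field_simps)
  finally show ?thesis
    by (simp add: B_def N_def)
qed

lemma sum_inverse_odd_primes_le_pow2:
  fixes A :: "nat set"
  assumes "\<forall>q\<in>A. prime q \<and> 3 \<le> q" "3 \<le> J"
  shows "(\<Sum>q\<in>{q\<in>A. q \<le> 2 ^ Suc J}. 1 / real q) \<le> 4/3 + 2 * ln (real J / 3)"
  using assms(2)
proof (induction J rule: nat_induct_at_least)
  case base
  have "{q\<in>A. q \<le> 2 ^ Suc 3} \<subseteq> {3, 5, 7, 9, 11, 13, 15}"
  proof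
    fix q assume "q \<in> {q\<in>A. q \<le> 2 ^ Suc 3}"
    then have "odd q" "3 \<le> q" "q \<le> 16"
      using assms(1) prime_odd_nat by auto
    then show "q \<in> {3, 5, 7, 9, 11, 13, 15}"
      unfolding insert_iff empty_iff by presburger
  qed
  then have "(\<Sum>q\<in>{q\<in>A. q \<le> 2 ^ Suc 3}. 1 / real q) \<le> (\<Sum>q\<in>{3, 5, 7, 9, 11, 13, 15::nat}. 1 / real q)"
    by (intro sum_mono2) auto
  then show ?case
    by simp
next
  case (Suc J)
  have "{q\<in>A. q \<le> 2 ^ Suc (Suc J)} = {q\<in>A. q \<le> 2 ^ Suc J} \<union> {q\<in>A. 2 ^ Suc J < q \<and> q \<le> 2 * 2 ^ Suc J}"
    by auto
  then have "(\<Sum>q\<in>{q\<in>A. q \<le> 2 ^ Suc (Suc J)}. 1 / real q)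
      = (\<Sum>q\<in>{q\<in>A. q \<le> 2 ^ Suc J}. 1 / real q) + (\<Sum>q\<in>{q\<in>A. 2 ^ Suc J < q \<and> q \<le> 2 * 2 ^ Suc J}. 1 / real q)"
    by (simp only:) (rule sum.union_disjoint, auto intro: finite_subset[of _ "{..2 ^ Suc (Suc J)}"])
  also have "\<dots> \<le> (4/3 + 2 * ln (real J / 3)) + 2 / real (Suc J)"
    using Suc.IH sum_inverse_primes_dyadic_le[of A "Suc J"] assms(1) by (intro add_mono) auto
  also have "\<dots> \<le> 4/3 + 2 * ln (real (Suc J) / 3)"
  proof -
    have J: "0 < real J"
      using Suc.hyps by simp
    have "1 / real (Suc J) \<le> ln (real (Suc J) / real J)"
      using one_minus_inverse_le_ln[of "real (Suc J) / real J"] J by (simp add: field_simps)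
    also have "\<dots> = ln (real (Suc J) / 3) - ln (real J / 3)"
      using J by (simp add: ln_div)
    finally show ?thesis
      by simp
  qed
  finally show ?case .
qed

lemma sum_inverse_odd_primes_le_card:
  fixes A :: "nat set"
  assumes "finite A" "\<forall>q\<in>A. prime q \<and> 3 \<le> q"
  shows "(\<Sum>q\<in>A. 1 / real q) \<le> 2/15 + real (card A) / 5"
proof -
  have "(\<Sum>q\<in>A - {3}. 1 / real q) \<le> (\<Sum>q\<in>A - {3}. 1 / 5)"
  proof (rule sum_mono)
    fix q assume q: "q \<in> A - {3}"
    then have "q \<noteq> 4"
      using assms(2) prime_odd_nat[of q] by auto
    then have "5 \<le> real q"
      using q assms(2) by auto
    then show "1 / real q \<le> 1 / 5"
      by (simp add: frac_le)
  qed
  then have rest: "(\<Sum>q\<in>A - {3}. 1 / real q) \<le> real (card (A - {3})) / 5"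
    by simp
  show ?thesis
  proof (cases "3 \<in> A")
    case True
    then have "card (A - {3}) = card A - 1" "1 \<le> card A"
      using assms(1) by (auto simp: Suc_le_eq card_gt_0_iff)
    then show ?thesis
      using True rest assms(1) by (simp add: sum.remove of_nat_diff diff_divide_distrib)
  next
    case False
    then have "(\<Sum>q\<in>A. 1 / real q) \<le> real (card A) / 5"
      using rest by simp
    then show ?thesis
      by linarith
  qed
qed

lemma ln_ln_ge_of_pow2_less:
  assumes "2 ^ J < n" "0 < J"
  shows "ln (real J / 3) + 2/3 \<le> ln (ln (real n + 1))"
proof -
  have "(2::real) ^ J \<le> real n"
    using assms(1) by (metis less_imp_le of_nat_le_iff of_nat_numeral of_nat_power)
  then have "ln ((2::real) ^ J) \<le> ln (real n + 1)"
    by (intro ln_mono) (linarith, simp)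
  moreover have "real J * (2/3) \<le> real J * ln 2"
    using ln2_ge_two_thirds by (intro mult_left_mono) auto
  ultimately have "real J * (2/3) \<le> ln (real n + 1)"
    by (simp add: ln_realpow)
  then have "ln (real J * (2/3)) \<le> ln (ln (real n + 1))"
    using assms(2) by (intro ln_mono) auto
  moreover have "ln (real J * (2/3)) = ln (real J / 3) + ln 2"
    using assms(2) ln_mult[of "real J / 3" 2] by simp
  ultimately show ?thesis
    using ln2_ge_two_thirds by linarith
qed

lemma sum_inverse_le_one:
  fixes A :: "nat set"
  assumes "finite A" "card A \<le> N" "\<forall>q\<in>A. N \<le> q" "0 < N"
  shows "(\<Sum>q\<in>A. 1 / real q) \<le> 1"
proof -
  have "(\<Sum>q\<in>A. 1 / real q) \<le> (\<Sum>q\<in>A. 1 / real N)"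
    using assms(3,4) by (intro sum_mono) (simp add: frac_le)
  also have "\<dots> \<le> 1"
    using assms(2,4) by (simp add: divide_le_eq)
  finally show ?thesis .
qed

lemma sum_inverse_odd_primes_le_ln_ln_large:
  fixes A :: "nat set"
  assumes "finite A" "\<forall>q\<in>A. prime q \<and> 3 \<le> q" "card A \<le> n" "8 < n"
  shows "(\<Sum>q\<in>A. 1 / real q) \<le> 1 + 2 * ln (ln (real n + 1))"
proof -
  have "1 \<le> n - 1"
    using assms(4) by simp
  then obtain J where J: "2 ^ J \<le> n - 1" "n - 1 < 2 ^ Suc J"
    using ex_power_ivl1[of 2 "n - 1"] by auto
  have "3 \<le> J"
  proof (rule ccontr)
    assume "\<not> 3 \<le> J"
    then have "(2::nat) ^ Suc J \<le> 2 ^ 3"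
      by (intro power_increasing) auto
    then show False
      using J assms(4) by simp
  qed
  let ?small = "{q\<in>A. q \<le> 2 ^ Suc J}" and ?large = "{q\<in>A. \<not> q \<le> 2 ^ Suc J}"
  have "card ?large \<le> 2 ^ Suc J"
    using card_mono[OF assms(1), of ?large] assms(3) J by auto
  then have large: "(\<Sum>q\<in>?large. 1 / real q) \<le> 1"
    using assms(1) by (intro sum_inverse_le_one) auto
  have "(\<Sum>q\<in>A. 1 / real q) = (\<Sum>q\<in>?small. 1 / real q) + (\<Sum>q\<in>?large. 1 / real q)"
    using assms(1) by (rule sum_split_filter)
  also have "\<dots> \<le> 4/3 + 2 * ln (real J / 3) + 1"
    using sum_inverse_odd_primes_le_pow2[OF assms(2) \<open>3 \<le> J\<close>] large by (rule add_mono)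
  also have "\<dots> \<le> 1 + 2 * ln (ln (real n + 1))"
  proof -
    have "2 ^ J < n"
      using J(1) assms(4) by linarith
    then show ?thesis
      using ln_ln_ge_of_pow2_less[of J n] \<open>3 \<le> J\<close> by simp
  qed
  finally show ?thesis .
qed

lemma sum_inverse_odd_primes_le_ln_ln:
  fixes A :: "nat set"
  assumes "finite A" "\<forall>q\<in>A. prime q \<and> 3 \<le> q" "card A \<le> n" "2 \<le> n"
  shows "(\<Sum>q\<in>A. 1 / real q) \<le> 1 + 2 * ln (ln (real n + 1))"
proof -
  have "ln 3 \<le> ln (real n + 1)"
    using assms(4) by simp
  then have "1 \<le> ln (real n + 1)"
    using ln_3_ge_1 by linarith
  then have ln_ln: "0 \<le> ln (ln (real n + 1))"
    by simp
  have "real (card A) \<le> real n"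
    using assms(3) by simp
  then have crude: "(\<Sum>q\<in>A. 1 / real q) \<le> 2/15 + real n / 5"
    using sum_inverse_odd_primes_le_card[OF assms(1,2)] by linarith
  consider "n \<le> 4" | "4 < n" "n \<le> 8" | "8 < n"
    by linarith
  then show ?thesis
  proof cases
    case 1
    then have "real n \<le> 4"
      by simp
    then show ?thesis
      using crude ln_ln by linarith
  next
    case 2
    have "ln 2 + ln 3 = ln (6::real)"
      using ln_mult[of 2 3] by simp
    also have "\<dots> \<le> ln (real n + 1)"
      using 2 by simp
    finally have "ln (5/3) \<le> ln (ln (real n + 1))"
      using ln2_ge_two_thirds ln_3_ge_1 2 by (subst ln_le_cancel_iff) auto
    moreover have "2/5 \<le> ln (5/3::real)"
      using one_minus_inverse_le_ln[of "5/3"] by simp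
    moreover have "real n \<le> 8"
      using 2 by simp
    ultimately show ?thesis
      using crude by linarith
  next
    case 3
    then show ?thesis
      using sum_inverse_odd_primes_le_ln_ln_large[OF assms(1-3)] by blast
  qed
qed

section \<open>The sum of the odds\<close>

lemma odds_le_pred:
  fixes v q :: real
  assumes "0 < v" "v \<le> q - 1"
  shows "v / (q - v) \<le> q - 1"
proof -
  have "v / (q - v) \<le> v"
    using assms by (simp add: divide_le_eq)
  then show ?thesis
    using assms by linarith
qed

lemma odds_mono:
  fixes v d q :: real
  assumes "0 < v" "v \<le> d" "d < q"
  shows "v / (q - v) \<le> d / (q - d)"
  using assms by (intro frac_le) auto

lemma odds_le_bound:
  fixes q d :: nat and v :: real
  assumes "0 < v" "v \<le> real q - 1" "v \<le> real d"
  shows "v / (real q - v) \<le> real d"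
proof (cases "q \<le> d")
  case True
  then show ?thesis
    using odds_le_pred[OF assms(1,2)] by linarith
next
  case False
  then have "v / (real q - v) \<le> real d / (real q - real d)"
    using assms by (intro odds_mono) auto
  also have "\<dots> \<le> real d"
    using False by (simp add: divide_le_eq mult_le_cancel_left1)
  finally show ?thesis .
qed

lemma odds_le_square_div:
  fixes d q :: real
  assumes "1 \<le> d" "2 * d + 1 \<le> q"
  shows "d / (q - d) \<le> (d + 1)^2 / (2 * q)"
proof -
  have "0 \<le> d^2 * (d - 1) + d + 1"
    using assms(1) by simp
  also have "\<dots> = (2 * d + 1) * (d^2 + 1) - d * (d + 1)^2"
    by (simp add: power2_eq_square algebra_simps)
  finally have "d * (d + 1)^2 \<le> (2 * d + 1) * (d^2 + 1)"
    by simp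
  also have "\<dots> \<le> q * (d^2 + 1)"
    using assms(2) by (intro mult_right_mono) auto
  finally have "2 * d * q \<le> (d + 1)^2 * (q - d)"
    by (simp add: power2_eq_square algebra_simps)
  then show ?thesis
    using assms by (simp add: divide_simps)
qed

lemma sum_odds_small_le:
  fixes Q :: "nat set" and v :: "nat \<Rightarrow> real"
  assumes "finite Q" "\<forall>q\<in>Q. 0 < q \<and> q \<le> d \<and> 0 < v q \<and> v q \<le> real q - 1"
  shows "(\<Sum>q\<in>Q. v q / (real q - v q)) \<le> real d * (real d - 1) / 2"
proof -
  have "(\<Sum>q\<in>Q. v q / (real q - v q)) \<le> (\<Sum>q\<in>Q. real q - 1)"
    using assms(2) by (intro sum_mono odds_le_pred) auto
  also have "\<dots> \<le> (\<Sum>q\<in>{1..d}. real q - 1)"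
    using assms(2) by (intro sum_mono2) auto
  also have "\<dots> = real d * (real d - 1) / 2"
    by (induction d) (auto simp: field_simps)
  finally show ?thesis .
qed

lemma sum_odds_medium_le:
  fixes Q :: "nat set" and v :: "nat \<Rightarrow> real"
  assumes "finite Q" "\<forall>q\<in>Q. d < q \<and> q \<le> 2 * d \<and> 0 < v q \<and> v q \<le> real q - 1 \<and> v q \<le> real d"
  shows "(\<Sum>q\<in>Q. v q / (real q - v q)) \<le> real d * real d"
proof -
  have "(\<Sum>q\<in>Q. v q / (real q - v q)) \<le> (\<Sum>q\<in>Q. real d)"
    using assms(2) by (intro sum_mono odds_le_bound) auto
  also have "\<dots> = real (card Q) * real d"
    by simp
  also have "\<dots> \<le> real d * real d"
  proof -
    have "card Q \<le> card {d<..2 * d}"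
      using assms(2) by (intro card_mono) auto
    then show ?thesis
      by (simp add: mult_right_mono)
  qed
  finally show ?thesis .
qed

lemma sum_odds_large_le:
  fixes Q :: "nat set" and v :: "nat \<Rightarrow> real"
  assumes "finite Q" "\<forall>q\<in>Q. prime q \<and> 2 * d < q \<and> 0 < v q \<and> v q \<le> real d"
    and "1 \<le> d" "card Q \<le> n" "2 \<le> n"
  shows "(\<Sum>q\<in>Q. v q / (real q - v q)) \<le> (real d + 1)^2 / 2 * (1 + 2 * ln (ln (real n + 1)))"
proof -
  have "(\<Sum>q\<in>Q. v q / (real q - v q)) \<le> (\<Sum>q\<in>Q. (real d + 1)^2 / 2 * (1 / real q))"
  proof (rule sum_mono)
    fix q assume q: "q \<in> Q"
    then have "v q / (real q - v q) \<le> real d / (real q - real d)"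
      using assms(2) by (intro odds_mono) auto
    also have "\<dots> \<le> (real d + 1)^2 / (2 * real q)"
      using assms(2,3) q by (intro odds_le_square_div) auto
    finally show "v q / (real q - v q) \<le> (real d + 1)^2 / 2 * (1 / real q)"
      by simp
  qed
  also have "\<dots> = (real d + 1)^2 / 2 * (\<Sum>q\<in>Q. 1 / real q)"
    by (simp add: sum_distrib_left)
  also have "\<dots> \<le> (real d + 1)^2 / 2 * (1 + 2 * ln (ln (real n + 1)))"
  proof (intro mult_left_mono sum_inverse_odd_primes_le_ln_ln)
    show "\<forall>q\<in>Q. prime q \<and> 3 \<le> q"
    proof
      fix q assume "q \<in> Q"
      then have "prime q" "2 * d < q"
        using assms(2) by auto
      then show "prime q \<and> 3 \<le> q"
        using assms(3) by linarith
    qed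
  qed (use assms(1,4,5) in simp_all)
  finally show ?thesis .
qed

lemma sum_odds_le:
  fixes Q :: "nat set" and v :: "nat \<Rightarrow> real"
  assumes "finite Q" "Q \<noteq> {}" "\<forall>q\<in>Q. prime q" "1 \<le> d"
    and v: "\<forall>q\<in>Q. 0 < v q \<and> v q \<le> real q - 1 \<and> v q \<le> real d"
  shows "(\<Sum>q\<in>Q. v q / (real q - v q)) \<le> (real d + 1)^2 * (2 + ln (ln (real (card Q) + 1)))"
proof (cases "card Q = 1")
  case True
  then obtain q where "Q = {q}"
    by (auto simp: card_1_singleton_iff)
  then have "(\<Sum>q\<in>Q. v q / (real q - v q)) \<le> real d"
    using v by (simp add: odds_le_bound)
  also have "\<dots> \<le> (real d + 1)^2 * (2 + ln (ln (real (card Q) + 1)))"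
  proof -
    have "exp (-1) \<le> (2/3::real)"
      using exp_ge_add_one_self[of 1] by (simp add: exp_minus field_simps)
    then have "-1 \<le> ln (ln (2::real))"
      using ln2_ge_two_thirds by (subst ln_ge_iff) auto
    then have "1 \<le> 2 + ln (ln (real (card Q) + 1))"
      using True by simp
    then have "(real d + 1)^2 * 1 \<le> (real d + 1)^2 * (2 + ln (ln (real (card Q) + 1)))"
      by (intro mult_left_mono) auto
    moreover have "real d \<le> (real d + 1)^2 * 1"
      by (simp add: power2_eq_square algebra_simps)
    ultimately show ?thesis
      by linarith
  qed
  finally show ?thesis .
next
  case False
  let ?f = "\<lambda>q. v q / (real q - v q)" and ?L = "ln (ln (real (card Q) + 1))"
  have "0 < card Q"
    using assms(1,2) by (simp add: card_gt_0_iff)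
  with False have "2 \<le> card Q"
    by linarith
  have "sum ?f Q = sum ?f {q\<in>Q. q \<le> d} + sum ?f {q\<in>Q. \<not> q \<le> d}"
    using assms(1) by (rule sum_split_filter)
  also have "sum ?f {q\<in>Q. \<not> q \<le> d} = sum ?f {q\<in>Q. d < q \<and> q \<le> 2 * d} + sum ?f {q\<in>Q. 2 * d < q}"
  proof -
    have "{q\<in>{q\<in>Q. \<not> q \<le> d}. q \<le> 2 * d} = {q\<in>Q. d < q \<and> q \<le> 2 * d}"
      "{q\<in>{q\<in>Q. \<not> q \<le> d}. \<not> q \<le> 2 * d} = {q\<in>Q. 2 * d < q}"
      by auto
    moreover have "finite {q\<in>Q. \<not> q \<le> d}"
      using assms(1) by simp
    ultimately show ?thesis
      using sum_split_filter[of "{q\<in>Q. \<not> q \<le> d}" ?f "\<lambda>q. q \<le> 2 * d"] by (simp only:)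
  qed
  finally have "sum ?f Q = sum ?f {q\<in>Q. q \<le> d} + sum ?f {q\<in>Q. d < q \<and> q \<le> 2 * d} + sum ?f {q\<in>Q. 2 * d < q}"
    by simp
  also have "\<dots> \<le> real d * (real d - 1) / 2 + real d * real d + (real d + 1)^2 / 2 * (1 + 2 * ?L)"
    using assms \<open>2 \<le> card Q\<close>
    by (intro add_mono sum_odds_small_le sum_odds_medium_le sum_odds_large_le)
       (auto simp: prime_gt_0_nat intro: card_mono)
  also have "\<dots> \<le> (real d + 1)^2 * (2 + ?L)"
    by (simp add: power2_eq_square field_simps)
  finally show ?thesis .
qed

section \<open>Squarefree divisors\<close>

lemma prime_factors_Prod_primes:
  fixes S :: "nat set"
  assumes "finite S" "\<forall>p\<in>S. prime p"
  shows "prime_factors (\<Prod>S) = S"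
proof -
  have "prime_factors (\<Prod>S) = \<Union>((prime_factors \<circ> (\<lambda>p. p)) ` S)"
    using assms by (intro prime_factors_prod) auto
  then show ?thesis
    using assms by (auto simp: prime_prime_factors)
qed

lemma squarefree_Prod_primes:
  fixes S :: "nat set"
  assumes "finite S" "\<forall>p\<in>S. prime p"
  shows "squarefree (\<Prod>S)"
  using assms by (intro squarefree_prod_coprime) (auto simp: primes_coprime squarefree_prime)

lemma moebius_Prod_primes:
  fixes S :: "nat set"
  assumes "finite S" "\<forall>p\<in>S. prime p"
  shows "moebius (\<Prod>S) = (-1) ^ card S"
  using assms by (simp add: moebius_def omega_def squarefree_Prod_primes prime_factors_Prod_primes)

lemma multiplicative_Prod_primes:
  fixes S :: "nat set" and m :: "nat \<Rightarrow> real"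
  assumes "finite S" "\<forall>p\<in>S. prime p" "multiplicative m" "m 1 \<noteq> 0"
  shows "m (\<Prod>S) = (\<Prod>p\<in>S. m p)"
  using assms(1,2)
proof (induction S rule: finite_induct)
  case empty
  have "m 1 = m 1 * m 1"
    using assms(3) unfolding multiplicative_def by (metis coprime_1_left mult_1 zero_less_one)
  then show ?case
    using assms(4) by simp
next
  case (insert p S)
  have "coprime p (\<Prod>S)"
    using insert by (intro prod_coprime_right) (auto intro: primes_coprime)
  moreover have "0 < p" "0 < \<Prod>S"
    using insert by (auto simp: prime_gt_0_nat)
  ultimately have "m (p * \<Prod>S) = m p * m (\<Prod>S)"
    using assms(3) unfolding multiplicative_def by blast
  then show ?case
    using insert by simp
qed

lemma squarefree_eq_Prod_prime_factors:
  fixes r :: nat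
  assumes "squarefree r"
  shows "r = \<Prod>(prime_factors r)"
proof -
  have "r \<noteq> 0"
    using assms by (metis not_squarefree_0)
  then have "\<forall>p\<in>prime_factors r. multiplicity p r = 1"
    using assms by (simp add: squarefree_factorial_semiring')
  then show ?thesis
    using prod_prime_factors[OF \<open>r \<noteq> 0\<close>] by simp
qed

lemma divisors_Prod_primes:
  fixes Q :: "nat set"
  assumes "finite Q" "\<forall>q\<in>Q. prime q"
  shows "{r. r dvd \<Prod>Q \<and> omega r \<le> l} = Prod ` {S\<in>Pow Q. card S \<le> l}"
proof (intro equalityI subsetI)
  fix r assume "r \<in> {r. r dvd \<Prod>Q \<and> omega r \<le> l}"
  then have r: "r dvd \<Prod>Q" "card (prime_factors r) \<le> l"
    by (auto simp: omega_def)
  then have "squarefree r"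
    using squarefree_Prod_primes[OF assms] squarefree_mono by blast
  moreover have "prime_factors r \<subseteq> Q"
  proof
    fix p assume p: "p \<in> prime_factors r"
    then have "prime p" "p dvd \<Prod>Q"
      using r(1) dvd_trans by (auto simp: in_prime_factors_iff)
    then obtain q where "q \<in> Q" "p dvd q"
      using assms(1) by (auto simp: prime_dvd_prod_iff)
    then show "p \<in> Q"
      using assms(2) \<open>prime p\<close> primes_dvd_imp_eq by blast
  qed
  ultimately show "r \<in> Prod ` {S\<in>Pow Q. card S \<le> l}"
    using r(2) squarefree_eq_Prod_prime_factors by blast
next
  fix r assume "r \<in> Prod ` {S\<in>Pow Q. card S \<le> l}"
  then obtain S where S: "S \<subseteq> Q" "card S \<le> l" and r: "r = \<Prod>S"
    by auto
  then have "finite S" "\<forall>p\<in>S. prime p"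
    using assms by (auto intro: finite_subset)
  then have "omega r = card S"
    by (simp add: r omega_def prime_factors_Prod_primes)
  moreover have "r dvd \<Prod>Q"
    using S assms(1) by (simp add: r prod_dvd_prod_subset)
  ultimately show "r \<in> {r. r dvd \<Prod>Q \<and> omega r \<le> l}"
    using S by simp
qed

lemma sum_moebius_divisors_Prod_primes:
  fixes Q :: "nat set" and m :: "nat \<Rightarrow> real"
  assumes "finite Q" "\<forall>q\<in>Q. prime q" "multiplicative m" "m 1 \<noteq> 0"
  shows "(\<Sum>r\<in>{r. r dvd \<Prod>Q \<and> omega r \<le> l}. real_of_int (moebius r) * m r / real r)
       = trunc_incl_excl (\<lambda>q. m q / real q) Q (Suc l)"
proof -
  let ?SS = "{S\<in>Pow Q. card S \<le> l}"
  have S: "finite S" "\<forall>p\<in>S. prime p" if "S \<in> ?SS" for S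
    using assms(1,2) that by (auto intro: finite_subset)
  have "inj_on Prod ?SS"
    using S by (intro inj_on_Prod_primes) auto
  then have "(\<Sum>r\<in>{r. r dvd \<Prod>Q \<and> omega r \<le> l}. real_of_int (moebius r) * m r / real r)
      = (\<Sum>S\<in>?SS. real_of_int (moebius (\<Prod>S)) * m (\<Prod>S) / real (\<Prod>S))"
    by (simp add: divisors_Prod_primes[OF assms(1,2)] sum.reindex)
  also have "\<dots> = (\<Sum>S\<in>?SS. (-1) ^ card S * (\<Prod>q\<in>S. m q / real q))"
    using S by (intro sum.cong)
      (simp_all add: moebius_Prod_primes multiplicative_Prod_primes[OF _ _ assms(3,4)] prod_dividef)
  also have "\<dots> = trunc_incl_excl (\<lambda>q. m q / real q) Q (Suc l)"
    unfolding trunc_incl_excl_def using assms(1)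
    by (simp add: sum.inter_filter[symmetric] less_Suc_eq_le)
  finally show ?thesis .
qed

theorem mainTheorem4:
  fixes Q :: "nat set" and d :: nat and l :: nat and m :: "nat \<Rightarrow> real"
  assumes "finite Q" and "Q \<noteq> {}" and "\<forall>q\<in>Q. prime q"
    and "d \<ge> 1" and "l > 0" and "odd l"
    and "\<forall>n>0. m n > 0" and "multiplicative m"
    and "\<forall>q\<in>Q. m q \<le> real q - 1" and "\<forall>q\<in>Q. m q \<le> real d"
  shows "(let \<alpha> = (real d + 1)^2 * (2 + ln (ln (real (card Q) + 1)))
          in (\<Sum>r\<in>{r. r dvd (\<Prod>q\<in>Q. q) \<and> omega r \<le> l}. real_of_int (moebius r) * m r / real r)
             \<ge> (\<Prod>q\<in>Q. 1 - m q / real q) * (1 - (exp 1 * \<alpha> / real l) ^ l * \<alpha> * exp \<alpha>))"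
proof -
  define \<alpha> where "\<alpha> = (real d + 1)^2 * (2 + ln (ln (real (card Q) + 1)))"
  have m_Q: "\<forall>q\<in>Q. 0 < m q \<and> m q \<le> real q - 1 \<and> m q \<le> real d"
    using assms(3,7,9,10) by (auto simp: prime_gt_0_nat)
  have x_Q: "\<forall>q\<in>Q. 0 \<le> m q / real q \<and> m q / real q < 1"
    using m_Q by (auto simp: divide_less_eq)
  have "(\<Sum>q\<in>Q. (m q / real q) / (1 - m q / real q)) = (\<Sum>q\<in>Q. m q / (real q - m q))"
    using m_Q by (intro sum.cong) (auto simp: field_simps)
  also have "\<dots> \<le> \<alpha>"
    unfolding \<alpha>_def using assms(1-4) m_Q by (rule sum_odds_le)
  finally have "(\<Prod>q\<in>Q. 1 - m q / real q) * (1 - (exp 1 * \<alpha> / real l) ^ l * \<alpha> * exp \<alpha>)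
      \<le> trunc_incl_excl (\<lambda>q. m q / real q) Q (Suc l)"
    using trunc_incl_excl_odd_lower_bound[OF assms(1) x_Q assms(6)] by blast
  moreover have "m 1 \<noteq> 0"
    using assms(7)[rule_format, of 1] by simp
  ultimately show ?thesis
    using sum_moebius_divisors_Prod_primes[OF assms(1,3,8)] by (simp add: Let_def \<alpha>_def)
qed

end
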